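(* Let $0<C<1$, $\epsilon=1/C-1$, $k=b/((1+\epsilon)\ln b)$, $b$ sufficiently large, and let $T$ be the complete tree with branching factor $b$, root $r$, leaves $L(T)$ and $n$ vertices; let $\Omega=\Omega(T)$ be its set of proper $k$-colorings. Let $S_c\subseteq\Omega$ be the colorings in which the root is frozen to color $c$, and $S=\bigcup_{1\le c\le k/2}S_c$. Then the conductance of $S$ for the heat-bath Glauber dynamics satisfies $\Phi_S\le\frac6n\sum_{z\in L(T)}\sum_{\sigma\in\Omega}\frac{\mathbf 1_{\sigma,z}}{|\Omega|}=\frac6n\sum_{z\in L(T)}\Pr_{\sigma\in\Omega}[\mathcal E(\sigma,z)]$, where $\sigma$ is uniform in $\Omega$.
   Context: A vertex $v$ is frozen in $\sigma$ if every proper coloring agreeing with $\sigma$ on the leaves of the subtree $T_v$ rooted at $v$ gives $v$ the color $\sigma(v)$. $\mathcal E(\sigma,z)$ (indicator $\mathbf 1_{\sigma,z}$) is the event that $\sigma$ is frozen at the root and there exists a color $c$ such that the coloring $\sigma^{z\to c}$, obtained by recoloring the leaf $z$ to $c$, is not frozen at the root. The heat-bath Glauber dynamics chooses a uniform vertex and recolors it uniformly among colors not used by its neighbors; $\pi$ is uniform on $\Omega$. The conductance of $S$ is $\Phi_S=\frac{\sum_{\sigma\in S}\sum_{\eta\notin S}\pi(\sigma)P(\sigma,\eta)}{\pi(S)\pi(\bar S)}$. *)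

theory Defs
  imports Complex_Main "HOL-Library.FuncSet"
begin

text \<open>Complete b-ary tree of height h: vertices are words over {0..<b} of length at most h;
  the root is the empty word; the children of v are v @ [i] for i < b; the leaves are the
  words of length exactly h.\<close>

definition tree_vertices :: "nat \<Rightarrow> nat \<Rightarrow> nat list set" where
  "tree_vertices b h = {xs. length xs \<le> h \<and> set xs \<subseteq> {0..<b}}"

definition tree_leaves :: "nat \<Rightarrow> nat \<Rightarrow> nat list set" where
  "tree_leaves b h = {xs \<in> tree_vertices b h. length xs = h}"

definition tree_root :: "nat list" where
  "tree_root = []"

definition tree_nbrs :: "nat \<Rightarrow> nat \<Rightarrow> nat list \<Rightarrow> nat list set" where
  "tree_nbrs b h v =
     (if v = [] then {} else {butlast v}) \<union>
     (if length v < h then {v @ [i] | i. i < b} else {})"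

definition proper_colorings :: "nat \<Rightarrow> nat \<Rightarrow> nat \<Rightarrow> (nat list \<Rightarrow> nat) set" where
  "proper_colorings b h k =
     {\<sigma> \<in> tree_vertices b h \<rightarrow>\<^sub>E {1..k}.
        \<forall>v \<in> tree_vertices b h. \<forall>u \<in> tree_nbrs b h v. \<sigma> u \<noteq> \<sigma> v}"

definition frozen_root :: "nat \<Rightarrow> nat \<Rightarrow> nat \<Rightarrow> (nat list \<Rightarrow> nat) \<Rightarrow> bool" where
  "frozen_root b h k \<sigma> =
     (\<forall>\<tau> \<in> proper_colorings b h k.
        (\<forall>z \<in> tree_leaves b h. \<tau> z = \<sigma> z) \<longrightarrow> \<tau> tree_root = \<sigma> tree_root)"

definition event_E :: "nat \<Rightarrow> nat \<Rightarrow> nat \<Rightarrow> (nat list \<Rightarrow> nat) \<Rightarrow> nat list \<Rightarrow> bool" where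
  "event_E b h k \<sigma> z =
     (frozen_root b h k \<sigma> \<and>
      (\<exists>c \<in> {1..k}. \<sigma>(z := c) \<in> proper_colorings b h k \<and>
                    \<not> frozen_root b h k (\<sigma>(z := c))))"

definition avail_colors :: "nat \<Rightarrow> nat \<Rightarrow> nat \<Rightarrow> (nat list \<Rightarrow> nat) \<Rightarrow> nat list \<Rightarrow> nat set" where
  "avail_colors b h k \<sigma> v = {c \<in> {1..k}. \<forall>u \<in> tree_nbrs b h v. \<sigma> u \<noteq> c}"

definition glauber_P :: "nat \<Rightarrow> nat \<Rightarrow> nat \<Rightarrow> (nat list \<Rightarrow> nat) \<Rightarrow> (nat list \<Rightarrow> nat) \<Rightarrow> real" where
  "glauber_P b h k \<sigma> \<eta> =
     (1 / real (card (tree_vertices b h))) *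
     (\<Sum>v \<in> tree_vertices b h.
        \<Sum>c \<in> avail_colors b h k \<sigma> v.
          (if \<eta> = \<sigma>(v := c) then 1 / real (card (avail_colors b h k \<sigma> v)) else 0))"

definition unif_pi :: "nat \<Rightarrow> nat \<Rightarrow> nat \<Rightarrow> (nat list \<Rightarrow> nat) set \<Rightarrow> real" where
  "unif_pi b h k A = real (card (A \<inter> proper_colorings b h k)) / real (card (proper_colorings b h k))"

definition conductance :: "nat \<Rightarrow> nat \<Rightarrow> nat \<Rightarrow> (nat list \<Rightarrow> nat) set \<Rightarrow> real" where
  "conductance b h k S =
     (\<Sum>\<sigma> \<in> S. \<Sum>\<eta> \<in> proper_colorings b h k - S.
        unif_pi b h k {\<sigma>} * glauber_P b h k \<sigma> \<eta>)
     / (unif_pi b h k S * unif_pi b h k (proper_colorings b h k - S))"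

end

theory Submission
  imports Defs "HOL-Combinatorics.Transposition"
begin

text \<open>The root of a tree of height \<open>h + 1\<close> with root color \<open>a\<close> is frozen as soon as, for every
  other color \<open>c\<close>, some child subtree is frozen with root color \<open>c\<close>. Permuting colors shows that
  all root colors are equally frequent, both among all colorings and among the frozen ones. So if a
  fraction \<open>q\<close> of the colorings of height \<open>h\<close> is frozen, then among the colorings of height
  \<open>h + 1\<close> with a given root color, whose \<open>b\<close> subtrees range over a product set, a union bound over
  \<open>c\<close> shows that at most a fraction \<open>(k - 1)(1 - q/(k - 1))\<^sup>b\<close> is not frozen. For
  \<open>k \<le> C b / ln b\<close> and \<open>q = (3 + C)/4\<close> this is at most \<open>1 - q\<close> once \<open>b\<close> is large, so by induction
  on \<open>h\<close> at least three quarters of all colorings are frozen. Hence the frozen colorings with root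
  color at most \<open>k/2\<close> form a set \<open>S\<close> of measure between \<open>1/3\<close> and \<open>1/2\<close>, and the conductance
  denominator is at least \<open>1/6\<close>. A single Glauber move leaves \<open>S\<close> only by recoloring a leaf \<open>z\<close>
  of a coloring in which \<open>\<E>(\<sigma>, z)\<close> holds, which bounds the numerator.\<close>

section \<open>The analytic estimate\<close>

lemma one_minus_power_le_exp:
  fixes t :: real
  assumes "0 \<le> t" "t \<le> 1"
  shows "(1 - t) ^ n \<le> exp (- t * real n)"
proof -
  have "(1 - t) ^ n \<le> exp (- t) ^ n"
    by (rule power_mono) (use exp_ge_add_one_self[of "-t"] assms in auto)
  also have "\<dots> = exp (- t * real n)" by (rule exp_of_nat2_mult[symmetric])
  finally show ?thesis .
qed

definition frozen_fraction_stable :: "nat \<Rightarrow> nat \<Rightarrow> real \<Rightarrow> bool" where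
  "frozen_fraction_stable b k q \<longleftrightarrow> (real k - 1) * (1 - q / (real k - 1)) ^ b \<le> 1 - q"

lemma frozen_fraction_stableI:
  fixes C q :: real
  assumes C: "0 < C" "C < 1" and q: "0 < q" "q < 1" and b: "3 \<le> real b"
    and k: "2 \<le> k" "real k \<le> C * real b / ln (real b)"
    and small: "real b powr (1 - q / C) \<le> 1 - q"
  shows "frozen_fraction_stable b k q"
proof -
  define x where "x = real b"
  define K where "K = real k"
  have x3: "3 \<le> x" using b x_def by simp
  have K2: "2 \<le> K" using k K_def by simp
  have lnx: "1 \<le> ln x"
  proof -
    have "exp 1 \<le> (3::real)" using exp_le by simp
    also have "\<dots> \<le> x" by (rule x3)
    finally show ?thesis using x3 by (simp add: ln_ge_iff)
  qed
  have KC: "K * ln x \<le> C * x" using k lnx by (simp add: pos_le_divide_eq x_def K_def)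
  have t: "0 \<le> q / (K - 1)" "q / (K - 1) \<le> 1" using q K2 by auto
  have "(1 - q / (K - 1)) ^ b \<le> exp (- (q / (K - 1)) * x)"
    using one_minus_power_le_exp[OF t] x_def by simp
  also have "\<dots> \<le> exp (- (q / K) * x)"
  proof -
    have "q / K \<le> q / (K - 1)" using q K2 by (intro divide_left_mono) auto
    then have "q / K * x \<le> q / (K - 1) * x" using x3 by (intro mult_right_mono) auto
    then show ?thesis by (intro exp_mono) (simp only: mult_minus_left neg_le_iff_le)
  qed
  also have "\<dots> \<le> exp (- (q / C) * ln x)"
  proof -
    have "ln x / C \<le> x / K" using KC K2 C by (simp add: field_simps)
    then have "q * (ln x / C) \<le> q * (x / K)" using q by (intro mult_left_mono) auto
    then show ?thesis by (intro exp_mono) (simp add: field_simps)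
  qed
  also have "\<dots> = x powr (- (q / C))" using x3 by (simp add: powr_def)
  finally have power_le: "(1 - q / (K - 1)) ^ b \<le> x powr (- (q / C))" .
  have "K - 1 \<le> x"
  proof -
    have "C * x / ln x \<le> x" using C lnx x3 by (simp add: divide_le_eq)
    then show ?thesis using k unfolding x_def K_def by linarith
  qed
  then have "(K - 1) * (1 - q / (K - 1)) ^ b \<le> x * x powr (- (q / C))"
    using power_le t x3 by (intro mult_mono) auto
  also have "\<dots> = x powr (1 - q / C)"
    using x3 powr_add[of x 1 "- (q / C)"] by simp
  finally show ?thesis using small unfolding frozen_fraction_stable_def x_def K_def by simp
qed

lemma eventually_large_branching:
  fixes C q :: real
  assumes "0 < C" "C < q" "q < 1"
  shows "eventually (\<lambda>b::nat. 3 \<le> real b \<and> 10 \<le> C * real b / ln (real b)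
           \<and> real b powr (1 - q / C) \<le> 1 - q) sequentially"
proof -
  have large: "eventually (\<lambda>b::nat. 3 \<le> real b) sequentially"
    by (rule eventually_sequentiallyI[of 3]) simp
  have "((\<lambda>b::nat. ln (real b) / real b) \<longlongrightarrow> 0) sequentially"
    using filterlim_compose[OF ln_x_over_x_tendsto_0 filterlim_real_sequentially] by simp
  then have log_small: "eventually (\<lambda>b::nat. ln (real b) / real b < C / 10) sequentially"
    by (rule order_tendstoD) (simp add: assms)
  have "1 - q / C < 0" using assms by (simp add: field_simps)
  then have "((\<lambda>b::nat. real b powr (1 - q / C)) \<longlongrightarrow> 0) sequentially"
    by (rule tendsto_neg_powr[OF _ filterlim_real_sequentially])
  then have powr_small: "eventually (\<lambda>b::nat. real b powr (1 - q / C) < 1 - q) sequentially"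
    by (rule order_tendstoD) (simp add: assms)
  from large log_small powr_small show ?thesis
  proof eventually_elim
    case (elim b)
    have "0 < ln (real b)" using elim by simp
    moreover have "10 * ln (real b) \<le> C * real b" using elim by (simp add: field_simps)
    ultimately show ?case using elim by (simp add: le_divide_eq)
  qed
qed

lemma frozen_fraction_stable_floor:
  fixes C q :: real
  assumes C: "0 < C" "C < 1" and q: "0 < q" "q < 1" and b: "3 \<le> real b"
    and ratio: "10 \<le> C * real b / ln (real b)" and small: "real b powr (1 - q / C) \<le> 1 - q"
  shows "9 \<le> nat \<lfloor>C * real b / ln (real b)\<rfloor>"
    and "frozen_fraction_stable b (nat \<lfloor>C * real b / ln (real b)\<rfloor>) q"
proof -
  have floor_ge: "10 \<le> \<lfloor>C * real b / ln (real b)\<rfloor>" using ratio by linarith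
  then show k9: "9 \<le> nat \<lfloor>C * real b / ln (real b)\<rfloor>" by linarith
  have "real (nat \<lfloor>C * real b / ln (real b)\<rfloor>) \<le> C * real b / ln (real b)"
    using floor_ge of_int_floor_le[of "C * real b / ln (real b)"] by simp
  then show "frozen_fraction_stable b (nat \<lfloor>C * real b / ln (real b)\<rfloor>) q"
    using k9 by (intro frozen_fraction_stableI[OF C q b _ _ small]) simp_all
qed

section \<open>Colorings of complete trees\<close>

lemma tree_leaves_0: "tree_leaves b 0 = {[]}"
  by (auto simp: tree_leaves_def tree_vertices_def)

lemma Nil_in_tree_vertices [simp]: "[] \<in> tree_vertices b h"
  by (simp add: tree_vertices_def)

lemma Cons_in_tree_vertices_Suc [simp]:
  "i # xs \<in> tree_vertices b (Suc h) \<longleftrightarrow> i < b \<and> xs \<in> tree_vertices b h"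
  by (auto simp: tree_vertices_def)

lemma Cons_in_tree_leaves_Suc [simp]:
  "i # xs \<in> tree_leaves b (Suc h) \<longleftrightarrow> i < b \<and> xs \<in> tree_leaves b h"
  by (auto simp: tree_leaves_def)

lemma tree_leaves_subset_vertices: "tree_leaves b h \<subseteq> tree_vertices b h"
  by (auto simp: tree_leaves_def)

lemma finite_tree_vertices: "finite (tree_vertices b h)"
proof -
  have "tree_vertices b h = {xs. set xs \<subseteq> {0..<b} \<and> length xs \<le> h}"
    by (auto simp: tree_vertices_def)
  then show ?thesis using finite_lists_length_le[of "{0..<b}" h] by simp
qed

lemma tree_nbrs_subset_vertices:
  "v \<in> tree_vertices b h \<Longrightarrow> tree_nbrs b h v \<subseteq> tree_vertices b h"
  by (auto simp: tree_nbrs_def tree_vertices_def dest: in_set_butlastD)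

lemma tree_nbrs_Suc_Cons:
  "tree_nbrs b (Suc h) (i # xs) = (if xs = [] then {[]} else {}) \<union> (#) i ` tree_nbrs b h xs"
  by (auto simp: tree_nbrs_def)

lemma tree_nbrs_Suc_Nil: "tree_nbrs b (Suc h) [] = {[j] | j. j < b}"
  by (auto simp: tree_nbrs_def)

lemma finite_proper_colorings: "finite (proper_colorings b h k)"
proof -
  have "proper_colorings b h k \<subseteq> tree_vertices b h \<rightarrow>\<^sub>E {1..k}"
    by (auto simp: proper_colorings_def)
  moreover have "finite (tree_vertices b h \<rightarrow>\<^sub>E {1..k})"
    by (intro finite_PiE finite_tree_vertices) auto
  ultimately show ?thesis by (rule finite_subset)
qed

lemma proper_colorings_nonempty:
  assumes "2 \<le> k"
  shows "proper_colorings b h k \<noteq> {}"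
proof -
  define \<sigma> where "\<sigma> = restrict (\<lambda>v::nat list. 1 + length v mod 2) (tree_vertices b h)"
  have "\<sigma> \<in> proper_colorings b h k"
    unfolding proper_colorings_def
  proof (intro CollectI conjI ballI)
    show "\<sigma> \<in> tree_vertices b h \<rightarrow>\<^sub>E {1..k}" unfolding \<sigma>_def using assms by auto
  next
    fix v u assume v: "v \<in> tree_vertices b h" and u: "u \<in> tree_nbrs b h v"
    have "length u = length v + 1 \<or> length v = length u + 1"
      using u by (auto simp: tree_nbrs_def split: if_splits)
    then have "length u mod 2 \<noteq> length v mod 2" by presburger
    then show "\<sigma> u \<noteq> \<sigma> v" unfolding \<sigma>_def using v u tree_nbrs_subset_vertices[OF v] by auto
  qed
  then show ?thesis by auto
qed

lemma proper_coloring_root_range: "\<tau> \<in> proper_colorings b h k \<Longrightarrow> \<tau> [] \<in> {1..k}"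
  unfolding proper_colorings_def by (metis (no_types, lifting) Nil_in_tree_vertices PiE_mem mem_Collect_eq)

definition subtree_coloring :: "nat \<Rightarrow> nat \<Rightarrow> (nat list \<Rightarrow> nat) \<Rightarrow> nat \<Rightarrow> nat list \<Rightarrow> nat" where
  "subtree_coloring b h \<sigma> i = restrict (\<lambda>xs. \<sigma> (i # xs)) (tree_vertices b h)"

definition join_colorings ::
    "nat \<Rightarrow> nat \<Rightarrow> nat \<Rightarrow> (nat \<Rightarrow> nat list \<Rightarrow> nat) \<Rightarrow> nat list \<Rightarrow> nat" where
  "join_colorings b h a f = (\<lambda>v. if v \<in> tree_vertices b (Suc h)
      then (case v of [] \<Rightarrow> a | i # xs \<Rightarrow> f i xs) else undefined)"

lemma join_colorings_Nil [simp]: "join_colorings b h a f [] = a"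
  by (simp add: join_colorings_def)

lemma subtree_coloring_proper:
  assumes "\<sigma> \<in> proper_colorings b (Suc h) k" "i < b"
  shows "subtree_coloring b h \<sigma> i \<in> proper_colorings b h k"
    and "subtree_coloring b h \<sigma> i [] \<noteq> \<sigma> []"
proof -
  have ext: "\<sigma> \<in> tree_vertices b (Suc h) \<rightarrow>\<^sub>E {1..k}" and
    proper: "\<And>v u. v \<in> tree_vertices b (Suc h) \<Longrightarrow> u \<in> tree_nbrs b (Suc h) v \<Longrightarrow> \<sigma> u \<noteq> \<sigma> v"
    using assms(1) by (auto simp: proper_colorings_def)
  show "subtree_coloring b h \<sigma> i \<in> proper_colorings b h k"
    unfolding proper_colorings_def
  proof (intro CollectI conjI ballI)
    show "subtree_coloring b h \<sigma> i \<in> tree_vertices b h \<rightarrow>\<^sub>E {1..k}"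
      using ext assms(2) by (auto simp: subtree_coloring_def)
  next
    fix v u assume v: "v \<in> tree_vertices b h" and u: "u \<in> tree_nbrs b h v"
    have "i # u \<in> tree_nbrs b (Suc h) (i # v)" using u by (simp add: tree_nbrs_Suc_Cons)
    then have "\<sigma> (i # u) \<noteq> \<sigma> (i # v)" using proper v assms(2) by simp
    then show "subtree_coloring b h \<sigma> i u \<noteq> subtree_coloring b h \<sigma> i v"
      using v u tree_nbrs_subset_vertices[OF v] by (auto simp: subtree_coloring_def)
  qed
  have "[i] \<in> tree_nbrs b (Suc h) []" using assms(2) by (simp add: tree_nbrs_Suc_Nil)
  then show "subtree_coloring b h \<sigma> i [] \<noteq> \<sigma> []"
    using proper[of "[]"] by (simp add: subtree_coloring_def)
qed

lemma join_colorings_proper: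
  assumes a: "a \<in> {1..k}"
    and f: "\<And>i. i < b \<Longrightarrow> f i \<in> proper_colorings b h k \<and> f i [] \<noteq> a"
  shows "join_colorings b h a f \<in> proper_colorings b (Suc h) k"
  unfolding proper_colorings_def
proof (intro CollectI conjI ballI)
  show "join_colorings b h a f \<in> tree_vertices b (Suc h) \<rightarrow>\<^sub>E {1..k}"
  proof (rule PiE_I)
    fix v assume v: "v \<in> tree_vertices b (Suc h)"
    show "join_colorings b h a f v \<in> {1..k}"
    proof (cases v)
      case Nil then show ?thesis using a by simp
    next
      case (Cons i xs)
      then show ?thesis using v f[of i] by (auto simp: join_colorings_def proper_colorings_def)
    qed
  qed (simp add: join_colorings_def)
next
  fix v u assume v: "v \<in> tree_vertices b (Suc h)" and u: "u \<in> tree_nbrs b (Suc h) v"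
  have uV: "u \<in> tree_vertices b (Suc h)" using tree_nbrs_subset_vertices[OF v] u by auto
  show "join_colorings b h a f u \<noteq> join_colorings b h a f v"
  proof (cases v)
    case Nil
    then obtain j where "u = [j]" "j < b" using u by (auto simp: tree_nbrs_Suc_Nil)
    then show ?thesis using f[of j] Nil uV by (auto simp: join_colorings_def)
  next
    case (Cons i xs)
    have i: "i < b" "xs \<in> tree_vertices b h" using v Cons by auto
    show ?thesis
    proof (cases "u = []")
      case True
      then have "xs = []" using u Cons by (auto simp: tree_nbrs_Suc_Cons split: if_splits)
      then show ?thesis using f[of i] True Cons v by (auto simp: join_colorings_def)
    next
      case False
      then obtain u' where u': "u = i # u'" "u' \<in> tree_nbrs b h xs"
        using u Cons by (auto simp: tree_nbrs_Suc_Cons split: if_splits)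
      have "f i u' \<noteq> f i xs"
        using f[OF i(1)] i(2) u'(2) by (auto simp: proper_colorings_def)
      then show ?thesis using u' Cons v uV by (simp add: join_colorings_def)
    qed
  qed
qed

lemma subtree_coloring_join:
  assumes "f i \<in> extensional (tree_vertices b h)" "i < b"
  shows "subtree_coloring b h (join_colorings b h a f) i = f i"
  using assms by (auto simp: subtree_coloring_def join_colorings_def extensional_def)

lemma coloring_eqI_subtrees:
  assumes "\<sigma> \<in> extensional (tree_vertices b (Suc h))" "\<tau> \<in> extensional (tree_vertices b (Suc h))"
    and "\<sigma> [] = \<tau> []" "\<And>i. i < b \<Longrightarrow> subtree_coloring b h \<sigma> i = subtree_coloring b h \<tau> i"
  shows "\<sigma> = \<tau>"
proof
  fix v show "\<sigma> v = \<tau> v"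
  proof (cases "v \<in> tree_vertices b (Suc h)")
    case False then show ?thesis using assms(1,2) by (simp add: extensional_def)
  next
    case True
    show ?thesis
    proof (cases v)
      case Nil then show ?thesis using assms(3) by simp
    next
      case (Cons i xs)
      then have "i < b" "xs \<in> tree_vertices b h" using True by auto
      then show ?thesis using assms(4)[of i] Cons
        by (auto simp: subtree_coloring_def fun_eq_iff dest: spec[of _ xs])
    qed
  qed
qed

lemma frozen_root_height_0: "frozen_root b 0 k \<sigma>"
  by (simp add: frozen_root_def tree_leaves_0 tree_root_def)

lemma frozen_root_SucI:
  assumes \<sigma>: "\<sigma> \<in> proper_colorings b (Suc h) k"
    and forced: "\<And>c. c \<in> {1..k} \<Longrightarrow> c \<noteq> \<sigma> [] \<Longrightarrow>
       \<exists>i<b. frozen_root b h k (subtree_coloring b h \<sigma> i) \<and> subtree_coloring b h \<sigma> i [] = c"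
  shows "frozen_root b (Suc h) k \<sigma>"
  unfolding frozen_root_def tree_root_def
proof (intro ballI impI)
  fix \<tau> assume \<tau>: "\<tau> \<in> proper_colorings b (Suc h) k"
    and agree: "\<forall>z\<in>tree_leaves b (Suc h). \<tau> z = \<sigma> z"
  show "\<tau> [] = \<sigma> []"
  proof (rule ccontr)
    assume ne: "\<tau> [] \<noteq> \<sigma> []"
    obtain i where i: "i < b" "frozen_root b h k (subtree_coloring b h \<sigma> i)"
        "subtree_coloring b h \<sigma> i [] = \<tau> []"
      using forced[OF proper_coloring_root_range[OF \<tau>] ne] by blast
    have "\<forall>z\<in>tree_leaves b h. subtree_coloring b h \<tau> i z = subtree_coloring b h \<sigma> i z"
      using agree i(1) tree_leaves_subset_vertices by (auto simp: subtree_coloring_def)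
    then have "subtree_coloring b h \<tau> i [] = subtree_coloring b h \<sigma> i []"
      using i(2) subtree_coloring_proper(1)[OF \<tau> i(1)]
      unfolding frozen_root_def tree_root_def by blast
    then show False using subtree_coloring_proper(2)[OF \<tau> i(1)] i(3) by simp
  qed
qed

section \<open>Symmetry under permuting colors\<close>

definition swap_colors ::
    "nat \<Rightarrow> nat \<Rightarrow> nat \<Rightarrow> nat \<Rightarrow> (nat list \<Rightarrow> nat) \<Rightarrow> nat list \<Rightarrow> nat" where
  "swap_colors b h a c \<tau> = restrict (transpose a c \<circ> \<tau>) (tree_vertices b h)"

lemma swap_colors_Nil [simp]: "swap_colors b h a c \<tau> [] = transpose a c (\<tau> [])"
  by (simp add: swap_colors_def)

lemma swap_colors_proper:
  assumes "\<tau> \<in> proper_colorings b h k" "a \<in> {1..k}" "c \<in> {1..k}"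
  shows "swap_colors b h a c \<tau> \<in> proper_colorings b h k"
proof -
  have ext: "\<tau> \<in> tree_vertices b h \<rightarrow>\<^sub>E {1..k}" and
    proper: "\<And>v u. v \<in> tree_vertices b h \<Longrightarrow> u \<in> tree_nbrs b h v \<Longrightarrow> \<tau> u \<noteq> \<tau> v"
    using assms(1) by (auto simp: proper_colorings_def)
  have "transpose a c x \<in> {1..k}" if "x \<in> {1..k}" for x
    using assms(2,3) that by (simp add: transpose_def)
  then show ?thesis
    unfolding proper_colorings_def
  proof (intro CollectI conjI ballI)
    show "swap_colors b h a c \<tau> \<in> tree_vertices b h \<rightarrow>\<^sub>E {1..k}"
      using ext \<open>\<And>x. x \<in> {1..k} \<Longrightarrow> _\<close> by (auto simp: swap_colors_def PiE_iff)
  next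
    fix v u assume v: "v \<in> tree_vertices b h" and u: "u \<in> tree_nbrs b h v"
    show "swap_colors b h a c \<tau> u \<noteq> swap_colors b h a c \<tau> v"
      using proper[OF v u] v u tree_nbrs_subset_vertices[OF v]
      by (auto simp: swap_colors_def dest: transpose_eq_imp_eq)
  qed
qed

lemma swap_colors_involutory:
  "\<tau> \<in> proper_colorings b h k \<Longrightarrow> swap_colors b h a c (swap_colors b h a c \<tau>) = \<tau>"
  unfolding proper_colorings_def swap_colors_def
  by (auto simp: fun_eq_iff PiE_iff extensional_def)

lemma frozen_root_swap_colors:
  assumes \<tau>: "\<tau> \<in> proper_colorings b h k" and ac: "a \<in> {1..k}" "c \<in> {1..k}"
    and frozen: "frozen_root b h k \<tau>"
  shows "frozen_root b h k (swap_colors b h a c \<tau>)"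
  unfolding frozen_root_def tree_root_def
proof (intro ballI impI)
  fix \<rho> assume \<rho>: "\<rho> \<in> proper_colorings b h k"
    and agree: "\<forall>z\<in>tree_leaves b h. \<rho> z = swap_colors b h a c \<tau> z"
  have "\<forall>z\<in>tree_leaves b h. swap_colors b h a c \<rho> z = \<tau> z"
    using agree tree_leaves_subset_vertices by (auto simp: swap_colors_def)
  then have "swap_colors b h a c \<rho> [] = \<tau> []"
    using frozen swap_colors_proper[OF \<rho> ac] unfolding frozen_root_def tree_root_def by blast
  then show "\<rho> [] = swap_colors b h a c \<tau> []" by (metis swap_colors_Nil transpose_involutory)
qed

lemma card_proper_colorings_by_root:
  "card {\<tau> \<in> proper_colorings b h k. P \<tau>} =
   (\<Sum>a\<in>{1..k}. card {\<tau> \<in> proper_colorings b h k. P \<tau> \<and> \<tau> [] = a})"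
proof -
  have "{\<tau> \<in> proper_colorings b h k. P \<tau>} =
        (\<Union>a\<in>{1..k}. {\<tau> \<in> proper_colorings b h k. P \<tau> \<and> \<tau> [] = a})"
    using proper_coloring_root_range[of _ b h k] by auto
  moreover have "card (\<Union>a\<in>{1..k}. {\<tau> \<in> proper_colorings b h k. P \<tau> \<and> \<tau> [] = a}) =
      (\<Sum>a\<in>{1..k}. card {\<tau> \<in> proper_colorings b h k. P \<tau> \<and> \<tau> [] = a})"
    by (rule card_UN_disjoint) (auto simp: finite_proper_colorings)
  ultimately show ?thesis by simp
qed

lemma card_root_color_class_eq:
  assumes P: "\<And>\<tau> a c. \<tau> \<in> proper_colorings b h k \<Longrightarrow> a \<in> {1..k} \<Longrightarrow> c \<in> {1..k} \<Longrightarrow>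
      P \<tau> \<Longrightarrow> P (swap_colors b h a c \<tau>)"
    and ac: "a \<in> {1..k}" "c \<in> {1..k}"
  shows "card {\<tau> \<in> proper_colorings b h k. P \<tau> \<and> \<tau> [] = a} =
         card {\<tau> \<in> proper_colorings b h k. P \<tau> \<and> \<tau> [] = c}"
proof -
  have le: "card {\<tau> \<in> proper_colorings b h k. P \<tau> \<and> \<tau> [] = a} \<le>
            card {\<tau> \<in> proper_colorings b h k. P \<tau> \<and> \<tau> [] = c}"
    if ac: "a \<in> {1..k}" "c \<in> {1..k}" for a c
  proof (rule card_inj_on_le[where f = "swap_colors b h a c"])
    show "inj_on (swap_colors b h a c) {\<tau> \<in> proper_colorings b h k. P \<tau> \<and> \<tau> [] = a}"
      by (rule inj_on_inverseI[where g = "swap_colors b h a c"]) (auto simp: swap_colors_involutory)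
    show "swap_colors b h a c ` {\<tau> \<in> proper_colorings b h k. P \<tau> \<and> \<tau> [] = a}
       \<subseteq> {\<tau> \<in> proper_colorings b h k. P \<tau> \<and> \<tau> [] = c}"
      using swap_colors_proper P ac by auto
  qed (simp add: finite_proper_colorings)
  show ?thesis using le[OF ac] le[OF ac(2,1)] by (rule le_antisym)
qed

lemma card_eq_colors_times_root_color_class:
  assumes P: "\<And>\<tau> a c. \<tau> \<in> proper_colorings b h k \<Longrightarrow> a \<in> {1..k} \<Longrightarrow> c \<in> {1..k} \<Longrightarrow>
      P \<tau> \<Longrightarrow> P (swap_colors b h a c \<tau>)"
    and a: "a \<in> {1..k}"
  shows "card {\<tau> \<in> proper_colorings b h k. P \<tau>} = k * card {\<tau> \<in> proper_colorings b h k. P \<tau> \<and> \<tau> [] = a}"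
proof -
  have "card {\<tau> \<in> proper_colorings b h k. P \<tau> \<and> \<tau> [] = c} =
        card {\<tau> \<in> proper_colorings b h k. P \<tau> \<and> \<tau> [] = a}" if "c \<in> {1..k}" for c
    using card_root_color_class_eq[of b h k P, OF P that a] .
  then show ?thesis unfolding card_proper_colorings_by_root[of b h k P] by simp
qed

lemma card_proper_colorings_eq:
  "a \<in> {1..k} \<Longrightarrow> card (proper_colorings b h k) = k * card {\<tau> \<in> proper_colorings b h k. \<tau> [] = a}"
  using card_eq_colors_times_root_color_class[of b h k "\<lambda>_. True"] by simp

lemma card_frozen_root_class_eq:
  "a \<in> {1..k} \<Longrightarrow> c \<in> {1..k} \<Longrightarrow>
   card {\<tau> \<in> proper_colorings b h k. frozen_root b h k \<tau> \<and> \<tau> [] = a} =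
   card {\<tau> \<in> proper_colorings b h k. frozen_root b h k \<tau> \<and> \<tau> [] = c}"
  by (rule card_root_color_class_eq[of b h k "frozen_root b h k", OF frozen_root_swap_colors])

lemma card_frozen_root_eq:
  "a \<in> {1..k} \<Longrightarrow> card {\<tau> \<in> proper_colorings b h k. frozen_root b h k \<tau>}
     = k * card {\<tau> \<in> proper_colorings b h k. frozen_root b h k \<tau> \<and> \<tau> [] = a}"
  by (rule card_eq_colors_times_root_color_class[of b h k "frozen_root b h k", OF frozen_root_swap_colors])

section \<open>Most colorings are frozen\<close>

lemma card_root_color_class_Suc_ge:
  assumes a: "a \<in> {1..k}"
  shows "card {\<tau> \<in> proper_colorings b h k. \<tau> [] \<noteq> a} ^ b
           \<le> card {\<sigma> \<in> proper_colorings b (Suc h) k. \<sigma> [] = a}"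
proof -
  define D where "D = {\<tau> \<in> proper_colorings b h k. \<tau> [] \<noteq> a}"
  have "card (PiE {0..<b} (\<lambda>_. D)) \<le> card {\<sigma> \<in> proper_colorings b (Suc h) k. \<sigma> [] = a}"
  proof (rule card_inj_on_le[where f = "join_colorings b h a"])
    show "inj_on (join_colorings b h a) (PiE {0..<b} (\<lambda>_. D))"
    proof (rule inj_onI)
      fix f g assume f: "f \<in> PiE {0..<b} (\<lambda>_. D)" and g: "g \<in> PiE {0..<b} (\<lambda>_. D)"
        and eq: "join_colorings b h a f = join_colorings b h a g"
      show "f = g"
      proof
        fix i show "f i = g i"
        proof (cases "i < b")
          case True
          have "f i \<in> extensional (tree_vertices b h)" "g i \<in> extensional (tree_vertices b h)"
            using f g True unfolding D_def proper_colorings_def by (auto simp: PiE_iff)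
          then show ?thesis using subtree_coloring_join[of _ i b h a] eq True by metis
        next
          case False then show ?thesis using f g by (auto simp: PiE_iff extensional_def)
        qed
      qed
    qed
    show "join_colorings b h a ` PiE {0..<b} (\<lambda>_. D)
        \<subseteq> {\<sigma> \<in> proper_colorings b (Suc h) k. \<sigma> [] = a}"
      using join_colorings_proper[OF a] by (fastforce simp: D_def PiE_iff)
  qed (simp add: finite_proper_colorings)
  then show ?thesis unfolding D_def by (simp add: card_PiE)
qed

text \<open>A coloring that is not frozen at the root misses some color \<open>c\<close> among the roots of its
  frozen child subtrees, so all of its subtree colorings avoid being frozen with root color \<open>c\<close>.\<close>

lemma card_not_frozen_root_class_Suc_le:
  assumes a: "a \<in> {1..k}"
  shows "card {\<sigma> \<in> proper_colorings b (Suc h) k. \<not> frozen_root b (Suc h) k \<sigma> \<and> \<sigma> [] = a}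
    \<le> (\<Sum>c\<in>{1..k} - {a}. card {\<tau> \<in> proper_colorings b h k.
                                   \<tau> [] \<noteq> a \<and> \<not> (frozen_root b h k \<tau> \<and> \<tau> [] = c)} ^ b)"
proof -
  define NF where
    "NF = {\<sigma> \<in> proper_colorings b (Suc h) k. \<not> frozen_root b (Suc h) k \<sigma> \<and> \<sigma> [] = a}"
  define E where
    "E c = {\<tau> \<in> proper_colorings b h k. \<tau> [] \<noteq> a \<and> \<not> (frozen_root b h k \<tau> \<and> \<tau> [] = c)}" for c
  define subtrees where "subtrees \<sigma> = (\<lambda>i\<in>{0..<b}. subtree_coloring b h \<sigma> i)" for \<sigma>
  have "card NF \<le> card (\<Union>c\<in>{1..k} - {a}. PiE {0..<b} (\<lambda>_. E c))"
  proof (rule card_inj_on_le[where f = subtrees])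
    show "inj_on subtrees NF"
    proof (rule inj_onI)
      fix \<sigma> \<tau> assume \<sigma>: "\<sigma> \<in> NF" and \<tau>: "\<tau> \<in> NF" and eq: "subtrees \<sigma> = subtrees \<tau>"
      show "\<sigma> = \<tau>"
      proof (rule coloring_eqI_subtrees)
        show "\<sigma> \<in> extensional (tree_vertices b (Suc h))" "\<tau> \<in> extensional (tree_vertices b (Suc h))"
          using \<sigma> \<tau> by (auto simp: NF_def proper_colorings_def PiE_iff)
        show "\<sigma> [] = \<tau> []" using \<sigma> \<tau> by (simp add: NF_def)
        show "subtree_coloring b h \<sigma> i = subtree_coloring b h \<tau> i" if "i < b" for i
          using fun_cong[OF eq, of i] that by (simp add: subtrees_def)
      qed
    qed
    show "subtrees ` NF \<subseteq> (\<Union>c\<in>{1..k} - {a}. PiE {0..<b} (\<lambda>_. E c))"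
    proof
      fix y assume "y \<in> subtrees ` NF"
      then obtain \<sigma> where \<sigma>: "\<sigma> \<in> proper_colorings b (Suc h) k" "\<not> frozen_root b (Suc h) k \<sigma>"
          "\<sigma> [] = a" and y: "y = subtrees \<sigma>"
        by (auto simp: NF_def)
      obtain c where c: "c \<in> {1..k}" "c \<noteq> a" and missed:
          "\<not> (\<exists>i<b. frozen_root b h k (subtree_coloring b h \<sigma> i) \<and> subtree_coloring b h \<sigma> i [] = c)"
        using frozen_root_SucI[OF \<sigma>(1)] \<sigma>(2,3) by blast
      have "y \<in> PiE {0..<b} (\<lambda>_. E c)"
        using subtree_coloring_proper[OF \<sigma>(1)] missed \<sigma>(3) by (auto simp: y subtrees_def E_def)
      then show "y \<in> (\<Union>c\<in>{1..k} - {a}. PiE {0..<b} (\<lambda>_. E c))" using c by blast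
    qed
  qed (auto simp: E_def finite_proper_colorings intro!: finite_UN_I finite_PiE)
  also have "\<dots> \<le> (\<Sum>c\<in>{1..k} - {a}. card (PiE {0..<b} (\<lambda>_. E c)))"
    by (rule card_UN_le) simp
  finally show ?thesis unfolding NF_def E_def by (simp add: card_PiE)
qed

lemma card_filter_add_card_filter_not:
  "finite A \<Longrightarrow> card {x \<in> A. P x} + card {x \<in> A. \<not> P x} = card A"
proof -
  assume "finite A"
  moreover have "A = {x \<in> A. P x} \<union> {x \<in> A. \<not> P x}" by blast
  ultimately show ?thesis by (metis (no_types, lifting) card_Un_disjoint disjoint_iff finite_Un mem_Collect_eq)
qed

lemma not_frozen_root_class_Suc_le:
  fixes q :: real
  assumes a: "a \<in> {1..k}" and k: "2 \<le> k" and q: "0 \<le> q" "q \<le> 1"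
    and stable: "frozen_fraction_stable b k q"
    and frozen: "q * real (card (proper_colorings b h k))
                \<le> real (card {\<tau> \<in> proper_colorings b h k. frozen_root b h k \<tau>})"
  shows "real (card {\<sigma> \<in> proper_colorings b (Suc h) k. \<not> frozen_root b (Suc h) k \<sigma> \<and> \<sigma> [] = a})
       \<le> (1 - q) * real (card {\<sigma> \<in> proper_colorings b (Suc h) k. \<sigma> [] = a})"
proof -
  define D where "D = {\<tau> \<in> proper_colorings b h k. \<tau> [] \<noteq> a}"
  define F where "F c = {\<tau> \<in> proper_colorings b h k. frozen_root b h k \<tau> \<and> \<tau> [] = c}" for c
  define R where "R = real (card {\<tau> \<in> proper_colorings b h k. \<tau> [] = a})"
  define M where "M = real (card D)"
  have "card D + card {\<tau> \<in> proper_colorings b h k. \<tau> [] = a} = card (proper_colorings b h k)"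
    using card_filter_add_card_filter_not[OF finite_proper_colorings, of b h k "\<lambda>\<tau>. \<tau> [] \<noteq> a"]
    by (simp add: D_def)
  also have "\<dots> = k * card {\<tau> \<in> proper_colorings b h k. \<tau> [] = a}"
    by (rule card_proper_colorings_eq[OF a])
  finally have "M + R = real k * R"
    unfolding M_def R_def by (simp flip: of_nat_add of_nat_mult)
  then have M: "M = (real k - 1) * R" by (simp add: algebra_simps)
  have "real k * (q * R) \<le> real k * real (card (F a))"
    using frozen card_proper_colorings_eq[OF a, of b h] card_frozen_root_eq[OF a, of b h]
    unfolding R_def F_def by (simp add: algebra_simps)
  then have qR: "q * R \<le> real (card (F a))" using k by simp
  have avoid: "real (card (D - F c)) \<le> M - q * R" if c: "c \<in> {1..k} - {a}" for c
  proof -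
    have sub: "F c \<subseteq> D" using c by (auto simp: F_def D_def)
    have "card (F c) = card (F a)"
      unfolding F_def using c a by (intro card_frozen_root_class_eq) auto
    moreover have "card (D - F c) = card D - card (F c)"
      using sub by (intro card_Diff_subset) (simp_all add: F_def finite_proper_colorings)
    moreover have "card (F c) \<le> card D"
      using sub by (intro card_mono) (simp_all add: D_def finite_proper_colorings)
    ultimately have "real (card (D - F c)) = M - real (card (F a))"
      unfolding M_def by (simp add: of_nat_diff)
    then show ?thesis using qR by linarith
  qed
  have "real (card {\<sigma> \<in> proper_colorings b (Suc h) k. \<not> frozen_root b (Suc h) k \<sigma> \<and> \<sigma> [] = a})
      \<le> (\<Sum>c\<in>{1..k} - {a}. real (card (D - F c)) ^ b)"
  proof -
    have "D - F c = {\<tau> \<in> proper_colorings b h k. \<tau> [] \<noteq> a \<and> \<not> (frozen_root b h k \<tau> \<and> \<tau> [] = c)}"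
      for c by (auto simp: D_def F_def)
    then show ?thesis
      using card_not_frozen_root_class_Suc_le[OF a, of b h] by (simp flip: of_nat_power of_nat_sum)
  qed
  also have "\<dots> \<le> (\<Sum>c\<in>{1..k} - {a}. (M - q * R) ^ b)"
    by (intro sum_mono power_mono avoid of_nat_0_le_iff)
  also have "\<dots> = (real k - 1) * (M - q * R) ^ b"
    using a k by (simp add: of_nat_diff)
  also have "M - q * R = (1 - q / (real k - 1)) * M"
    using k by (simp add: M field_simps)
  also have "(real k - 1) * ((1 - q / (real k - 1)) * M) ^ b
      = ((real k - 1) * (1 - q / (real k - 1)) ^ b) * M ^ b"
    by (simp add: power_mult_distrib)
  also have "\<dots> \<le> (1 - q) * M ^ b"
    using stable by (intro mult_right_mono) (auto simp: frozen_fraction_stable_def M_def)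
  also have "\<dots> \<le> (1 - q) * real (card {\<sigma> \<in> proper_colorings b (Suc h) k. \<sigma> [] = a})"
    using card_root_color_class_Suc_ge[OF a, of b h] q
    by (intro mult_left_mono) (auto simp: M_def D_def simp flip: of_nat_power)
  finally show ?thesis .
qed

lemma frozen_fraction_ge:
  fixes q :: real
  assumes k: "2 \<le> k" and q: "0 \<le> q" "q \<le> 1" and stable: "frozen_fraction_stable b k q"
  shows "q * real (card (proper_colorings b h k))
         \<le> real (card {\<tau> \<in> proper_colorings b h k. frozen_root b h k \<tau>})"
proof (induction h)
  case 0
  have "{\<tau> \<in> proper_colorings b 0 k. frozen_root b 0 k \<tau>} = proper_colorings b 0 k"
    using frozen_root_height_0 by blast
  then show ?case using mult_left_le_one_le[of "real (card (proper_colorings b 0 k))" q] q by simp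
next
  case (Suc h)
  let ?\<Omega> = "proper_colorings b (Suc h) k"
  have "real (card {\<tau> \<in> ?\<Omega>. \<not> frozen_root b (Suc h) k \<tau>})
      = (\<Sum>a\<in>{1..k}. real (card {\<tau> \<in> ?\<Omega>. \<not> frozen_root b (Suc h) k \<tau> \<and> \<tau> [] = a}))"
    by (simp only: card_proper_colorings_by_root[of b "Suc h" k "\<lambda>\<tau>. \<not> frozen_root b (Suc h) k \<tau>"]
        of_nat_sum)
  also have "\<dots> \<le> (\<Sum>a\<in>{1..k}. (1 - q) * real (card {\<tau> \<in> ?\<Omega>. \<tau> [] = a}))"
    by (rule sum_mono, rule not_frozen_root_class_Suc_le[OF _ k q stable Suc]) simp
  also have "\<dots> = (1 - q) * real (card ?\<Omega>)"
    using card_proper_colorings_by_root[of b "Suc h" k "\<lambda>_. True"]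
    by (simp add: sum_distrib_left)
  finally have "real (card {\<tau> \<in> ?\<Omega>. \<not> frozen_root b (Suc h) k \<tau>}) \<le> (1 - q) * real (card ?\<Omega>)" .
  moreover have "real (card {\<tau> \<in> ?\<Omega>. frozen_root b (Suc h) k \<tau>})
      + real (card {\<tau> \<in> ?\<Omega>. \<not> frozen_root b (Suc h) k \<tau>}) = real (card ?\<Omega>)"
    using card_filter_add_card_filter_not[OF finite_proper_colorings, of b "Suc h" k "frozen_root b (Suc h) k"]
    by (simp flip: of_nat_add)
  moreover have "(1 - q) * real (card ?\<Omega>) = real (card ?\<Omega>) - q * real (card ?\<Omega>)"
    by (simp add: algebra_simps)
  ultimately show ?case by linarith
qed

section \<open>Conductance of the frozen set\<close>

definition frozen_low_colorings :: "nat \<Rightarrow> nat \<Rightarrow> nat \<Rightarrow> (nat list \<Rightarrow> nat) set" where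
  "frozen_low_colorings b h k = {\<sigma> \<in> proper_colorings b h k. frozen_root b h k \<sigma> \<and>
     1 \<le> \<sigma> tree_root \<and> real (\<sigma> tree_root) \<le> real k / 2}"

lemma frozen_low_colorings_subset: "frozen_low_colorings b h k \<subseteq> proper_colorings b h k"
  by (auto simp: frozen_low_colorings_def)

text \<open>Recoloring an internal vertex keeps the root frozen, and recoloring the root of a frozen
  coloring is impossible; so only a leaf move can leave the set, and then it witnesses \<open>\<E>(\<sigma>, v)\<close>.\<close>

lemma leaving_frozen_low_imp_event_E:
  assumes h: "1 \<le> h" and \<sigma>: "\<sigma> \<in> frozen_low_colorings b h k" and c: "c \<in> {1..k}"
    and leaves: "\<sigma>(v := c) \<in> proper_colorings b h k - frozen_low_colorings b h k"
  shows "v \<in> tree_leaves b h \<and> event_E b h k \<sigma> v"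
proof -
  have frozen: "frozen_root b h k \<sigma>" and root: "1 \<le> \<sigma> []" "real (\<sigma> []) \<le> real k / 2"
    using \<sigma> by (auto simp: frozen_low_colorings_def tree_root_def)
  have proper': "\<sigma>(v := c) \<in> proper_colorings b h k"
    and not_low: "\<sigma>(v := c) \<notin> frozen_low_colorings b h k" using leaves by auto
  have root_kept: "(\<sigma>(v := c)) [] = \<sigma> []" if "v \<notin> tree_leaves b h"
  proof -
    have "\<forall>z\<in>tree_leaves b h. (\<sigma>(v := c)) z = \<sigma> z" using that by auto
    then show ?thesis using frozen proper' unfolding frozen_root_def tree_root_def by blast
  qed
  show ?thesis
  proof (cases "v \<in> tree_leaves b h")
    case True
    then have "v \<noteq> []" using h by (auto simp: tree_leaves_def)
    then have "\<not> frozen_root b h k (\<sigma>(v := c))"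
      using not_low proper' root by (auto simp: frozen_low_colorings_def tree_root_def)
    then show ?thesis using True frozen proper' c unfolding event_E_def by blast
  next
    case False
    have "frozen_root b h k (\<sigma>(v := c))"
      unfolding frozen_root_def tree_root_def
    proof (intro ballI impI)
      fix \<tau> assume \<tau>: "\<tau> \<in> proper_colorings b h k"
        and agree: "\<forall>z\<in>tree_leaves b h. \<tau> z = (\<sigma>(v := c)) z"
      have "\<forall>z\<in>tree_leaves b h. \<tau> z = \<sigma> z" using agree False by auto
      then have "\<tau> [] = \<sigma> []" using frozen \<tau> unfolding frozen_root_def tree_root_def by blast
      then show "\<tau> [] = (\<sigma>(v := c)) []" using root_kept[OF False] by simp
    qed
    then have "\<sigma>(v := c) \<in> frozen_low_colorings b h k"
      using proper' root_kept[OF False] root by (auto simp: frozen_low_colorings_def tree_root_def)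
    then show ?thesis using not_low by simp
  qed
qed

lemma glauber_exit_probability_le:
  assumes h: "1 \<le> h" and \<sigma>: "\<sigma> \<in> frozen_low_colorings b h k"
  shows "(\<Sum>\<eta>\<in>proper_colorings b h k - frozen_low_colorings b h k. glauber_P b h k \<sigma> \<eta>)
    \<le> 1 / real (card (tree_vertices b h)) *
       (\<Sum>z\<in>tree_leaves b h. if event_E b h k \<sigma> z then 1 else 0)"
proof -
  define V where "V = tree_vertices b h"
  define A where "A = avail_colors b h k \<sigma>"
  define T where "T = proper_colorings b h k - frozen_low_colorings b h k"
  have "(\<Sum>\<eta>\<in>T. \<Sum>v\<in>V. \<Sum>c\<in>A v. (if \<eta> = \<sigma>(v := c) then 1 / real (card (A v)) else 0))
     = (\<Sum>v\<in>V. \<Sum>c\<in>A v. \<Sum>\<eta>\<in>T. (if \<eta> = \<sigma>(v := c) then 1 / real (card (A v)) else 0))"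
    by (subst sum.swap) (simp add: sum.swap[of _ T])
  also have "\<dots> = (\<Sum>v\<in>V. \<Sum>c\<in>A v. (if \<sigma>(v := c) \<in> T then 1 / real (card (A v)) else 0))"
    using finite_proper_colorings by (simp add: T_def)
  also have "\<dots> \<le> (\<Sum>v\<in>V. if v \<in> tree_leaves b h then if event_E b h k \<sigma> v then 1 else 0 else 0)"
  proof (rule sum_mono)
    fix v
    show "(\<Sum>c\<in>A v. (if \<sigma>(v := c) \<in> T then 1 / real (card (A v)) else 0))
        \<le> (if v \<in> tree_leaves b h then if event_E b h k \<sigma> v then 1 else 0 else 0)"
    proof (cases "v \<in> tree_leaves b h \<and> event_E b h k \<sigma> v")
      case True
      have "(\<Sum>c\<in>A v. (if \<sigma>(v := c) \<in> T then 1 / real (card (A v)) else 0))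
          \<le> (\<Sum>c\<in>A v. 1 / real (card (A v)))" by (rule sum_mono) auto
      also have "\<dots> \<le> 1" by (cases "card (A v) = 0") auto
      finally show ?thesis using True by simp
    next
      case False
      have "\<sigma>(v := c) \<notin> T" if "c \<in> A v" for c
        using leaving_frozen_low_imp_event_E[OF h \<sigma>, of c v] False that
        unfolding A_def T_def avail_colors_def by blast
      then show ?thesis using False by simp
    qed
  qed
  also have "\<dots> = (\<Sum>z\<in>tree_leaves b h. if event_E b h k \<sigma> z then 1 else 0)"
    using sum.inter_restrict[OF finite_tree_vertices, of "\<lambda>z. if event_E b h k \<sigma> z then (1::real) else 0"
        b h "tree_leaves b h"] tree_leaves_subset_vertices[of b h]
    by (simp add: V_def Int_absorb1)
  finally have "(\<Sum>\<eta>\<in>T. \<Sum>v\<in>V. \<Sum>c\<in>A v. (if \<eta> = \<sigma>(v := c) then 1 / real (card (A v)) else 0))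
      \<le> (\<Sum>z\<in>tree_leaves b h. if event_E b h k \<sigma> z then 1 else 0)" .
  moreover have "(\<Sum>\<eta>\<in>T. glauber_P b h k \<sigma> \<eta>) = 1 / real (card V) *
      (\<Sum>\<eta>\<in>T. \<Sum>v\<in>V. \<Sum>c\<in>A v. (if \<eta> = \<sigma>(v := c) then 1 / real (card (A v)) else 0))"
    unfolding glauber_P_def V_def A_def by (simp add: sum_distrib_left)
  ultimately show ?thesis unfolding T_def V_def by (simp add: divide_right_mono)
qed

lemma unif_pi_singleton:
  "\<sigma> \<in> proper_colorings b h k \<Longrightarrow> unif_pi b h k {\<sigma>} = 1 / real (card (proper_colorings b h k))"
  by (simp add: unif_pi_def)

lemma unif_pi_Diff:
  assumes "A \<subseteq> proper_colorings b h k" "proper_colorings b h k \<noteq> {}"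
  shows "unif_pi b h k (proper_colorings b h k - A) = 1 - unif_pi b h k A"
proof -
  have "finite A" using assms(1) finite_proper_colorings finite_subset by blast
  then have "card (proper_colorings b h k - A) = card (proper_colorings b h k) - card A"
    using assms(1) by (rule card_Diff_subset)
  moreover have "card A \<le> card (proper_colorings b h k)"
    using finite_proper_colorings assms(1) by (rule card_mono)
  moreover have "card (proper_colorings b h k) \<noteq> 0"
    using assms(2) finite_proper_colorings by simp
  ultimately show ?thesis
    using assms(1) by (simp add: unif_pi_def Int_absorb2 Diff_Int_distrib2 of_nat_diff diff_divide_distrib)
qed

lemma flow_out_of_frozen_low_le:
  assumes h: "1 \<le> h"
  shows "(\<Sum>\<sigma>\<in>frozen_low_colorings b h k. \<Sum>\<eta>\<in>proper_colorings b h k - frozen_low_colorings b h k.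
            unif_pi b h k {\<sigma>} * glauber_P b h k \<sigma> \<eta>)
    \<le> 1 / real (card (tree_vertices b h)) * (\<Sum>z\<in>tree_leaves b h. \<Sum>\<sigma>\<in>proper_colorings b h k.
            (if event_E b h k \<sigma> z then 1 else 0) / real (card (proper_colorings b h k)))"
proof -
  define N where "N = real (card (proper_colorings b h k))"
  define n where "n = real (card (tree_vertices b h))"
  define X where "X \<sigma> = (\<Sum>z\<in>tree_leaves b h. if event_E b h k \<sigma> z then 1 else (0::real))" for \<sigma>
  have "(\<Sum>\<sigma>\<in>frozen_low_colorings b h k. \<Sum>\<eta>\<in>proper_colorings b h k - frozen_low_colorings b h k.
            unif_pi b h k {\<sigma>} * glauber_P b h k \<sigma> \<eta>)
      \<le> (\<Sum>\<sigma>\<in>frozen_low_colorings b h k. 1 / N * (1 / n * X \<sigma>))"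
  proof (rule sum_mono)
    fix \<sigma> assume \<sigma>: "\<sigma> \<in> frozen_low_colorings b h k"
    then have "unif_pi b h k {\<sigma>} = 1 / N"
      using frozen_low_colorings_subset unif_pi_singleton unfolding N_def by blast
    then have "(\<Sum>\<eta>\<in>proper_colorings b h k - frozen_low_colorings b h k.
                 unif_pi b h k {\<sigma>} * glauber_P b h k \<sigma> \<eta>)
        = 1 / N * (\<Sum>\<eta>\<in>proper_colorings b h k - frozen_low_colorings b h k. glauber_P b h k \<sigma> \<eta>)"
      by (simp add: sum_distrib_left)
    also have "\<dots> \<le> 1 / N * (1 / n * X \<sigma>)"
      using glauber_exit_probability_le[OF h \<sigma>] unfolding X_def n_def N_def
      by (rule mult_left_mono) simp
    finally show "(\<Sum>\<eta>\<in>proper_colorings b h k - frozen_low_colorings b h k.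
                 unif_pi b h k {\<sigma>} * glauber_P b h k \<sigma> \<eta>) \<le> 1 / N * (1 / n * X \<sigma>)" .
  qed
  also have "\<dots> \<le> (\<Sum>\<sigma>\<in>proper_colorings b h k. 1 / N * (1 / n * X \<sigma>))"
    by (rule sum_mono2[OF finite_proper_colorings frozen_low_colorings_subset])
      (simp add: X_def N_def n_def sum_nonneg)
  also have "\<dots> = 1 / n * (\<Sum>z\<in>tree_leaves b h. \<Sum>\<sigma>\<in>proper_colorings b h k.
                    (if event_E b h k \<sigma> z then 1 else 0) / N)"
    unfolding X_def
    by (simp add: sum_distrib_left sum_divide_distrib sum.swap[of _ "tree_leaves b h"] algebra_simps)
  finally show ?thesis unfolding N_def n_def .
qed

lemma unif_pi_frozen_low_bounds:
  assumes k: "9 \<le> k"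
    and frozen: "3 / 4 * real (card (proper_colorings b h k))
                \<le> real (card {\<tau> \<in> proper_colorings b h k. frozen_root b h k \<tau>})"
  shows "1 / 3 \<le> unif_pi b h k (frozen_low_colorings b h k)"
    and "unif_pi b h k (frozen_low_colorings b h k) \<le> 1 / 2"
proof -
  define F where "F c = {\<tau> \<in> proper_colorings b h k. frozen_root b h k \<tau> \<and> \<tau> [] = c}" for c
  define G where "G = real (card (F 1))"
  define N where "N = real (card (proper_colorings b h k))"
  have one: "(1::nat) \<in> {1..k}" using k by simp
  have half: "real c \<le> real k / 2 \<longleftrightarrow> c \<le> k div 2" for c by linarith
  have "frozen_low_colorings b h k = (\<Union>c\<in>{1..k div 2}. F c)"
  proof (intro set_eqI iffI)
    fix \<sigma> assume "\<sigma> \<in> frozen_low_colorings b h k"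
    then have "\<sigma> \<in> F (\<sigma> [])" "\<sigma> [] \<in> {1..k div 2}"
      using half[of "\<sigma> []"] by (simp_all add: frozen_low_colorings_def F_def tree_root_def)
    then show "\<sigma> \<in> (\<Union>c\<in>{1..k div 2}. F c)" by blast
  next
    fix \<sigma> assume "\<sigma> \<in> (\<Union>c\<in>{1..k div 2}. F c)"
    then obtain c where "c \<in> {1..k div 2}" "\<sigma> \<in> F c" by blast
    then show "\<sigma> \<in> frozen_low_colorings b h k"
      using half[of c] by (simp add: frozen_low_colorings_def F_def tree_root_def)
  qed
  moreover have "card (\<Union>c\<in>{1..k div 2}. F c) = (\<Sum>c\<in>{1..k div 2}. card (F c))"
    by (rule card_UN_disjoint) (auto simp: F_def finite_proper_colorings)
  ultimately have "card (frozen_low_colorings b h k) = (\<Sum>c\<in>{1..k div 2}. card (F c))"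
    by simp
  also have "\<dots> = (\<Sum>c\<in>{1..k div 2}. card (F 1))"
  proof (rule sum.cong)
    fix c assume "c \<in> {1..k div 2}"
    then have "c \<in> {1..k}" by auto
    then show "card (F c) = card (F 1)" unfolding F_def by (rule card_frozen_root_class_eq[OF _ one])
  qed simp
  also have "\<dots> = (k div 2) * card (F 1)" by simp
  finally have S: "unif_pi b h k (frozen_low_colorings b h k) = real (k div 2) * G / N"
    using frozen_low_colorings_subset unfolding unif_pi_def G_def N_def by (simp add: Int_absorb2)
  have kG: "real k * G = real (card {\<tau> \<in> proper_colorings b h k. frozen_root b h k \<tau>})"
    using card_frozen_root_eq[OF one, of b h] unfolding G_def F_def by simp
  have "real k * G \<le> N"
    using finite_proper_colorings unfolding kG N_def by (simp add: card_mono)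
  have "3 / 4 * N \<le> real k * G" using frozen kG unfolding N_def by simp
  have "0 < N"
    using proper_colorings_nonempty[of k b h] k finite_proper_colorings
    by (simp add: N_def card_gt_0_iff)
  have "0 \<le> G" by (simp add: G_def)
  have "1 / 3 * N \<le> real (k div 2) * G"
  proof -
    have "1 / 3 * N \<le> 4 / 9 * real k * G" using \<open>3 / 4 * N \<le> real k * G\<close> by simp
    also have "\<dots> \<le> real (k div 2) * G"
      using k \<open>0 \<le> G\<close> by (intro mult_right_mono) linarith+
    finally show ?thesis .
  qed
  then show "1 / 3 \<le> unif_pi b h k (frozen_low_colorings b h k)"
    using \<open>0 < N\<close> unfolding S by (simp add: le_divide_eq)
  have "real (k div 2) * G \<le> real k / 2 * G"
    using \<open>0 \<le> G\<close> by (intro mult_right_mono) linarith+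
  then have "real (k div 2) * G \<le> 1 / 2 * N" using \<open>real k * G \<le> N\<close> by simp
  then show "unif_pi b h k (frozen_low_colorings b h k) \<le> 1 / 2"
    using \<open>0 < N\<close> unfolding S by (simp add: divide_le_eq)
qed

lemma conductance_frozen_low_le:
  fixes q :: real
  assumes h: "1 \<le> h" and k: "9 \<le> k" and q: "3 / 4 \<le> q" "q \<le> 1"
    and stable: "frozen_fraction_stable b k q"
  shows "conductance b h k (frozen_low_colorings b h k) \<le>
        6 / real (card (tree_vertices b h)) * (\<Sum>z \<in> tree_leaves b h. \<Sum>\<sigma> \<in> proper_colorings b h k.
            (if event_E b h k \<sigma> z then 1 else 0) / real (card (proper_colorings b h k)))"
proof -
  define s where "s = unif_pi b h k (frozen_low_colorings b h k)"
  define Y where "Y = 1 / real (card (tree_vertices b h)) *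
    (\<Sum>z \<in> tree_leaves b h. \<Sum>\<sigma> \<in> proper_colorings b h k.
       (if event_E b h k \<sigma> z then 1 else 0) / real (card (proper_colorings b h k)))"
  have "q * real (card (proper_colorings b h k))
        \<le> real (card {\<tau> \<in> proper_colorings b h k. frozen_root b h k \<tau>})"
    using frozen_fraction_ge[OF _ _ q(2) stable] k q by simp
  then have "3 / 4 * real (card (proper_colorings b h k))
        \<le> real (card {\<tau> \<in> proper_colorings b h k. frozen_root b h k \<tau>})"
    using q by (smt (verit) mult_right_mono of_nat_0_le_iff)
  then have s: "1 / 3 \<le> s" "s \<le> 1 / 2"
    using unif_pi_frozen_low_bounds[OF k] unfolding s_def by auto
  have "unif_pi b h k (proper_colorings b h k - frozen_low_colorings b h k) = 1 - s"
    using unif_pi_Diff[OF frozen_low_colorings_subset proper_colorings_nonempty] k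
    unfolding s_def by simp
  moreover have "1 / 6 \<le> s * (1 - s)"
  proof -
    have "0 \<le> (s - 1 / 3) * (2 / 3 - s)" using s by (intro mult_nonneg_nonneg) auto
    then show ?thesis by (simp add: field_simps)
  qed
  moreover have "0 \<le> Y" unfolding Y_def by (intro mult_nonneg_nonneg sum_nonneg) auto
  ultimately have "conductance b h k (frozen_low_colorings b h k) \<le> Y / (1 / 6)"
    using flow_out_of_frozen_low_le[OF h, of b k]
    unfolding conductance_def s_def[symmetric] Y_def[symmetric]
    by (intro frac_le) auto
  then show ?thesis by (simp add: Y_def ac_simps)
qed

theorem lemma8:
  fixes C :: real
  assumes "0 < C" and "C < 1"
  shows "\<exists>b0::nat. \<forall>b \<ge> b0. \<forall>h::nat. h \<ge> 1 \<longrightarrow>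
    (let \<epsilon> = 1 / C - 1;
         k = nat \<lfloor>real b / ((1 + \<epsilon>) * ln (real b))\<rfloor>;
         \<Omega> = proper_colorings b h k;
         n = card (tree_vertices b h);
         S = {\<sigma> \<in> \<Omega>. frozen_root b h k \<sigma> \<and> 1 \<le> \<sigma> tree_root \<and> real (\<sigma> tree_root) \<le> real k / 2}
     in conductance b h k S \<le>
        6 / real n * (\<Sum>z \<in> tree_leaves b h. \<Sum>\<sigma> \<in> \<Omega>.
            (if event_E b h k \<sigma> z then 1 else 0) / real (card \<Omega>)))"
proof -
  define q where "q = (3 + C) / 4"
  have q: "0 < q" "C < q" "q < 1" "3 / 4 \<le> q" using assms by (auto simp: q_def)
  obtain b0 where b0: "\<And>b. b0 \<le> b \<Longrightarrow> 3 \<le> real b \<and> 10 \<le> C * real b / ln (real b)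
      \<and> real b powr (1 - q / C) \<le> 1 - q"
    using eventually_large_branching[OF assms(1) q(2,3)] unfolding eventually_sequentially by blast
  have main: "conductance b h k (frozen_low_colorings b h k) \<le>
          6 / real (card (tree_vertices b h)) * (\<Sum>z \<in> tree_leaves b h. \<Sum>\<sigma> \<in> proper_colorings b h k.
            (if event_E b h k \<sigma> z then 1 else 0) / real (card (proper_colorings b h k)))"
    if b: "b0 \<le> b" and h: "1 \<le> h" and k: "k = nat \<lfloor>real b / ((1 + (1 / C - 1)) * ln (real b))\<rfloor>"
    for b h k
  proof -
    have "k = nat \<lfloor>C * real b / ln (real b)\<rfloor>" using k assms(1) by (simp add: field_simps)
    then have "9 \<le> k" "frozen_fraction_stable b k q"
      using b0[OF b] frozen_fraction_stable_floor[OF assms q(1,3)] by simp_all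
    then show ?thesis using q(3,4) by (intro conductance_frozen_low_le[OF h]) simp_all
  qed
  show ?thesis
    unfolding Let_def frozen_low_colorings_def[symmetric]
    by (intro exI[of _ b0] allI impI main) simp_all
qed

end
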